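(* Let $R$ be an idempotent semiring and let $A,B$ be irreducible $R$-algebras such that the structure maps $R\to A$ and $R\to B$ have trivial kernel (the preimage of $0$ is $\{0\}$; this is automatic if $R$ is a semifield). Then $A\otimes_RB$ is irreducible.
   Context: Semirings are commutative with $1\neq0$; idempotent means $a+a=a$ for all $a$. A semiring is irreducible if whenever $xy$ is nilpotent, $x$ or $y$ is nilpotent. $A\otimes_RB$ is the tensor product of $R$-algebras (the coproduct in the category of $R$-algebras). *)

theory Defs
  imports Main "HOL-Library.Multiset"
begin

definition idempotent_semiring :: "'a::comm_semiring_1 itself \<Rightarrow> bool" where
  "idempotent_semiring _ \<longleftrightarrow> (\<forall>a::'a. a + a = a)"

definition nilpotent :: "'a::comm_semiring_1 \<Rightarrow> bool" where
  "nilpotent x \<longleftrightarrow> (\<exists>n. x ^ n = 0)"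

definition irreducible_semiring :: "'a::comm_semiring_1 itself \<Rightarrow> bool" where
  "irreducible_semiring _ \<longleftrightarrow>
     (\<forall>x y::'a. nilpotent (x * y) \<longrightarrow> nilpotent x \<or> nilpotent y)"

(* An R-algebra is a commutative semiring A with a semiring homomorphism R \<rightarrow> A *)
definition semiring_hom :: "('r::comm_semiring_1 \<Rightarrow> 'a::comm_semiring_1) \<Rightarrow> bool" where
  "semiring_hom f \<longleftrightarrow> f 0 = 0 \<and> f 1 = 1 \<and>
     (\<forall>x y. f (x + y) = f x + f y) \<and> (\<forall>x y. f (x * y) = f x * f y)"

(* Tensor product A \<otimes>_R B: finite formal sums (multisets) of pure tensors (a,b),
   modulo the smallest congruence identifying the tensor relations. *)

definition tmult :: "('a::comm_semiring_1 \<times> 'b::comm_semiring_1) multiset \<Rightarrow> ('a \<times> 'b) multiset \<Rightarrow> ('a \<times> 'b) multiset" where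
  "tmult x y = (\<Sum>p\<in>#x. image_mset (\<lambda>q. (fst p * fst q, snd p * snd q)) y)"

primrec tpow :: "('a::comm_semiring_1 \<times> 'b::comm_semiring_1) multiset \<Rightarrow> nat \<Rightarrow> ('a \<times> 'b) multiset" where
  "tpow x 0 = {#(1, 1)#}"
| "tpow x (Suc n) = tmult x (tpow x n)"

inductive tensor_eq :: "('r::comm_semiring_1 \<Rightarrow> 'a::comm_semiring_1) \<Rightarrow> ('r \<Rightarrow> 'b::comm_semiring_1)
    \<Rightarrow> ('a \<times> 'b) multiset \<Rightarrow> ('a \<times> 'b) multiset \<Rightarrow> bool"
  for \<phi> \<psi> where
  addL: "tensor_eq \<phi> \<psi> {#(a + a', b)#} {#(a, b), (a', b)#}"
| addR: "tensor_eq \<phi> \<psi> {#(a, b + b')#} {#(a, b), (a, b')#}"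
| scal: "tensor_eq \<phi> \<psi> {#(\<phi> r * a, b)#} {#(a, \<psi> r * b)#}"
| zeroL: "tensor_eq \<phi> \<psi> {#(0, b)#} {#}"
| zeroR: "tensor_eq \<phi> \<psi> {#(a, 0)#} {#}"
| refl: "tensor_eq \<phi> \<psi> x x"
| sym: "tensor_eq \<phi> \<psi> x y \<Longrightarrow> tensor_eq \<phi> \<psi> y x"
| trans: "tensor_eq \<phi> \<psi> x y \<Longrightarrow> tensor_eq \<phi> \<psi> y z \<Longrightarrow> tensor_eq \<phi> \<psi> x z"
| add: "tensor_eq \<phi> \<psi> x y \<Longrightarrow> tensor_eq \<phi> \<psi> (x + z) (y + z)"
| mult: "tensor_eq \<phi> \<psi> x y \<Longrightarrow> tensor_eq \<phi> \<psi> (tmult x z) (tmult y z)"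

definition tensor_nilpotent :: "('r::comm_semiring_1 \<Rightarrow> 'a::comm_semiring_1) \<Rightarrow> ('r \<Rightarrow> 'b::comm_semiring_1)
    \<Rightarrow> ('a \<times> 'b) multiset \<Rightarrow> bool" where
  "tensor_nilpotent \<phi> \<psi> x \<longleftrightarrow> (\<exists>n. tensor_eq \<phi> \<psi> (tpow x n) {#})"

definition tensor_irreducible :: "('r::comm_semiring_1 \<Rightarrow> 'a::comm_semiring_1) \<Rightarrow> ('r \<Rightarrow> 'b::comm_semiring_1) \<Rightarrow> bool" where
  "tensor_irreducible \<phi> \<psi> \<longleftrightarrow>
     (\<forall>x y. tensor_nilpotent \<phi> \<psi> (tmult x y) \<longrightarrow> tensor_nilpotent \<phi> \<psi> x \<or> tensor_nilpotent \<phi> \<psi> y)"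

end

theory Submission
  imports Defs
begin

text \<open>
  Say that a formal sum of pure tensors has a non-nilpotent term if one of its terms
  \<open>a \<otimes> b\<close> has both \<open>a\<close> and \<open>b\<close> non-nilpotent. This property is invariant under the
  defining relations of the tensor product: under the additivity relations because in an
  idempotent semiring a sum is nilpotent iff both summands are, and under the balancing
  relation because, the structure maps having trivial kernel, \<open>\<phi> r\<close> is nilpotent iff \<open>r\<close>
  is iff \<open>\<psi> r\<close> is. By irreducibility of \<open>A\<close> and \<open>B\<close> a product has a non-nilpotent term
  iff both factors do, so no power of such a sum is equivalent to \<open>0\<close>. Conversely, a sum
  without one is a sum of nilpotent pure tensors and therefore nilpotent.
\<close>

lemma nilpotent_zero: "nilpotent (0::'a::comm_semiring_1)"
  unfolding nilpotent_def by (rule exI[of _ 1]) simp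

lemma not_nilpotent_one: "\<not> nilpotent (1::'a::comm_semiring_1)"
  unfolding nilpotent_def by simp

lemma nilpotent_mult_iff:
  assumes "irreducible_semiring TYPE('a::comm_semiring_1)"
  shows "nilpotent ((a::'a) * b) \<longleftrightarrow> nilpotent a \<or> nilpotent b"
proof
  assume "nilpotent (a * b)"
  then show "nilpotent a \<or> nilpotent b"
    using assms unfolding irreducible_semiring_def by blast
next
  assume "nilpotent a \<or> nilpotent b"
  then show "nilpotent (a * b)"
    unfolding nilpotent_def by (metis mult_zero_left mult_zero_right power_mult_distrib)
qed

lemma nilpotent_add:
  assumes "nilpotent (a::'a::comm_semiring_1)" "nilpotent b"
  shows "nilpotent (a + b)"
proof -
  obtain i j where a: "a ^ i = 0" and b: "b ^ j = 0"
    using assms unfolding nilpotent_def by blast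
  have "(a + b) ^ (i + j) = (\<Sum>k\<le>i + j. of_nat ((i + j) choose k) * a ^ k * b ^ (i + j - k))"
    by (rule binomial_ring)
  also have "\<dots> = 0"
  proof (rule sum.neutral, rule ballI)
    fix k
    show "of_nat ((i + j) choose k) * a ^ k * b ^ (i + j - k) = 0"
    proof (cases "i \<le> k")
      case True
      then have "a ^ k = a ^ i * a ^ (k - i)" by (simp flip: power_add)
      then show ?thesis using a by simp
    next
      case False
      then have "i + j - k = j + (i - k)" by simp
      then have "b ^ (i + j - k) = b ^ j * b ^ (i - k)" by (simp add: power_add)
      then show ?thesis using b by simp
    qed
  qed
  finally show ?thesis unfolding nilpotent_def by blast
qed

lemma power_add_eq_power_plus: "\<exists>c. ((a::'a::comm_semiring_1) + b) ^ n = a ^ n + c"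
proof (induction n)
  case 0
  show ?case by (metis add.right_neutral power_0)
next
  case (Suc n)
  then obtain c where "(a + b) ^ n = a ^ n + c" by blast
  then have "(a + b) ^ Suc n = a ^ Suc n + (a * c + b * a ^ n + b * c)"
    by (simp add: algebra_simps)
  then show ?case by blast
qed

lemma idempotent_add_eq_0D:
  assumes "(1::'a::comm_semiring_1) + 1 = 1" and "s + t = (0::'a)"
  shows "s = 0"
proof -
  have "s + s = s"
    by (metis assms(1) distrib_left mult.right_neutral)
  have "s = s + (s + t)" using assms(2) by simp
  also have "\<dots> = (s + s) + t" by (simp add: add.assoc)
  also have "\<dots> = 0" using \<open>s + s = s\<close> assms(2) by simp
  finally show ?thesis .
qed

lemma nilpotent_add_iff:
  assumes "(1::'a::comm_semiring_1) + 1 = 1"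
  shows "nilpotent ((a::'a) + b) \<longleftrightarrow> nilpotent a \<and> nilpotent b"
proof
  assume "nilpotent (a + b)"
  then obtain n where n: "(a + b) ^ n = 0" unfolding nilpotent_def by blast
  obtain c d where "(a + b) ^ n = a ^ n + c" and "(b + a) ^ n = b ^ n + d"
    using power_add_eq_power_plus by blast
  then have "a ^ n = 0" and "b ^ n = 0"
    using idempotent_add_eq_0D[OF assms] n by (metis add.commute)+
  then show "nilpotent a \<and> nilpotent b" unfolding nilpotent_def by blast
qed (simp add: nilpotent_add)

lemma semiring_hom_power: "semiring_hom f \<Longrightarrow> f (r ^ n) = f r ^ n"
  by (induction n) (auto simp: semiring_hom_def)

lemma nilpotent_semiring_hom_iff:
  assumes "semiring_hom f" and "\<forall>r. f r = 0 \<longrightarrow> r = 0"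
  shows "nilpotent (f r) \<longleftrightarrow> nilpotent r"
  using assms semiring_hom_power[OF assms(1)] unfolding nilpotent_def semiring_hom_def by metis

lemma semiring_hom_one_add_one:
  assumes "idempotent_semiring TYPE('r::comm_semiring_1)"
    and "semiring_hom (f :: 'r \<Rightarrow> 'a::comm_semiring_1)"
  shows "(1::'a) + 1 = 1"
proof -
  have "(1::'r) + 1 = 1" using assms(1) unfolding idempotent_semiring_def by blast
  then show ?thesis using assms(2) unfolding semiring_hom_def by metis
qed

definition pair_mult :: "'a::comm_semiring_1 \<times> 'b::comm_semiring_1 \<Rightarrow> 'a \<times> 'b \<Rightarrow> 'a \<times> 'b" where
  "pair_mult p q = (fst p * fst q, snd p * snd q)"

lemma pair_mult_commute: "pair_mult p q = pair_mult q p"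
  by (simp add: pair_mult_def mult.commute)

lemma pair_mult_assoc: "pair_mult (pair_mult p q) r = pair_mult p (pair_mult q r)"
  by (simp add: pair_mult_def mult.assoc)

lemma pair_mult_one_left: "pair_mult (1, 1) = (\<lambda>q. q)"
  by (simp add: pair_mult_def fun_eq_iff)

lemma tmult_empty_left [simp]: "tmult {#} y = {#}"
  by (simp add: tmult_def)

lemma tmult_add_mset_left [simp]:
  "tmult (add_mset p x) y = image_mset (pair_mult p) y + tmult x y"
  unfolding tmult_def pair_mult_def[abs_def] by simp

lemma tmult_union_left: "tmult (x + x') y = tmult x y + tmult x' y"
  by (simp add: tmult_def)

lemma tmult_empty_right [simp]: "tmult x {#} = {#}"
  by (induction x) auto

lemma tmult_add_mset_right [simp]:
  "tmult x (add_mset q y) = image_mset (\<lambda>p. pair_mult p q) x + tmult x y"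
  by (induction x) auto

lemma tmult_commute: "tmult x y = tmult y x"
proof (induction x)
  case (add p x)
  have "image_mset (pair_mult p) y = image_mset (\<lambda>q. pair_mult q p) y"
    by (rule image_mset_cong) (simp add: pair_mult_commute)
  then show ?case using add by simp
qed simp

lemma tmult_union_right: "tmult x (y + y') = tmult x y + tmult x y'"
  by (metis tmult_union_left tmult_commute)

lemma tmult_image_mset_pair_mult:
  "tmult (image_mset (pair_mult p) y) z = image_mset (pair_mult p) (tmult y z)"
proof (induction y)
  case (add q y)
  have "image_mset (pair_mult (pair_mult p q)) z
      = image_mset (pair_mult p) (image_mset (pair_mult q) z)"
    by (simp add: image_mset.compositionality o_def)
      (rule image_mset_cong, simp add: pair_mult_assoc)
  then show ?case using add by simp
qed simp

lemma tmult_assoc: "tmult (tmult x y) z = tmult x (tmult y z)"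
  by (induction x) (simp_all add: tmult_union_left tmult_image_mset_pair_mult)

lemma tmult_left_commute: "tmult x (tmult y z) = tmult y (tmult x z)"
  by (metis tmult_assoc tmult_commute)

lemma set_mset_tmult: "set_mset (tmult x y) = {pair_mult p q | p q. p \<in># x \<and> q \<in># y}"
  by (induction x) auto

lemma tpow_singleton: "tpow {#(a, b)#} n = {#(a ^ n, b ^ n)#}"
  by (induction n) (simp_all add: pair_mult_def)

lemma tpow_union_decompose:
  "\<exists>u v. tpow (x + y) (i + j) = tmult (tpow x i) u + tmult (tpow y j) v"
proof (induction i arbitrary: j)
  case 0
  show ?case
    by (rule exI[of _ "tpow (x + y) j"], rule exI[of _ "{#}"]) (simp add: pair_mult_one_left)
next
  case (Suc i)
  note IH_i = Suc.IH
  show ?case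
  proof (induction j)
    case 0
    show ?case
      by (rule exI[of _ "{#}"], rule exI[of _ "tpow (x + y) (Suc i)"]) (simp add: pair_mult_one_left)
  next
    case (Suc j)
    obtain u v where uv: "tpow (x + y) (i + Suc j) = tmult (tpow x i) u + tmult (tpow y (Suc j)) v"
      using IH_i by blast
    obtain u' v' where uv': "tpow (x + y) (Suc i + j) = tmult (tpow x (Suc i)) u' + tmult (tpow y j) v'"
      using Suc.IH by blast
    have x_part: "tmult x (tpow (x + y) (i + Suc j))
        = tmult (tpow x (Suc i)) u + tmult (tpow y (Suc j)) (tmult x v)"
      unfolding uv tmult_union_right by (simp add: tmult_assoc tmult_left_commute)
    have y_part: "tmult y (tpow (x + y) (Suc i + j))
        = tmult (tpow x (Suc i)) (tmult y u') + tmult (tpow y (Suc j)) v'"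
      unfolding uv' tmult_union_right by (simp add: tmult_assoc tmult_left_commute)
    have "tpow (x + y) (Suc i + Suc j)
        = tmult x (tpow (x + y) (i + Suc j)) + tmult y (tpow (x + y) (Suc i + j))"
      by (simp add: tmult_union_left)
    also have "\<dots> = tmult (tpow x (Suc i)) (u + tmult y u') + tmult (tpow y (Suc j)) (tmult x v + v')"
      unfolding x_part y_part tmult_union_right by (simp add: add_ac)
    finally show ?case by blast
  qed
qed

lemma tensor_eq_0_tmult: "tensor_eq \<phi> \<psi> x {#} \<Longrightarrow> tensor_eq \<phi> \<psi> (tmult x z) {#}"
  using tensor_eq.mult[of \<phi> \<psi> x "{#}" z] by simp

lemma tensor_eq_0_union:
  "tensor_eq \<phi> \<psi> x {#} \<Longrightarrow> tensor_eq \<phi> \<psi> y {#} \<Longrightarrow> tensor_eq \<phi> \<psi> (x + y) {#}"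
  using tensor_eq.add[of \<phi> \<psi> x "{#}" y] tensor_eq.trans by fastforce

lemma tensor_nilpotent_union:
  assumes "tensor_nilpotent \<phi> \<psi> x" and "tensor_nilpotent \<phi> \<psi> y"
  shows "tensor_nilpotent \<phi> \<psi> (x + y)"
proof -
  obtain i j where "tensor_eq \<phi> \<psi> (tpow x i) {#}" and "tensor_eq \<phi> \<psi> (tpow y j) {#}"
    using assms unfolding tensor_nilpotent_def by blast
  moreover obtain u v where "tpow (x + y) (i + j) = tmult (tpow x i) u + tmult (tpow y j) v"
    using tpow_union_decompose by blast
  ultimately have "tensor_eq \<phi> \<psi> (tpow (x + y) (i + j)) {#}"
    by (metis tensor_eq_0_union tensor_eq_0_tmult)
  then show ?thesis unfolding tensor_nilpotent_def by blast
qed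

lemma tensor_nilpotent_singleton:
  assumes "nilpotent a \<or> nilpotent b"
  shows "tensor_nilpotent \<phi> \<psi> {#(a, b)#}"
proof -
  obtain n where "a ^ n = 0 \<or> b ^ n = 0" using assms unfolding nilpotent_def by blast
  then have "tensor_eq \<phi> \<psi> (tpow {#(a, b)#} n) {#}"
    unfolding tpow_singleton using tensor_eq.zeroL tensor_eq.zeroR by fastforce
  then show ?thesis unfolding tensor_nilpotent_def by blast
qed

definition has_nonnilpotent_term :: "('a::comm_semiring_1 \<times> 'b::comm_semiring_1) multiset \<Rightarrow> bool" where
  "has_nonnilpotent_term x \<longleftrightarrow> (\<exists>p\<in>#x. \<not> nilpotent (fst p) \<and> \<not> nilpotent (snd p))"

lemma tensor_nilpotent_if_not_has_nonnilpotent_term: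
  "\<not> has_nonnilpotent_term x \<Longrightarrow> tensor_nilpotent \<phi> \<psi> x"
proof (induction x)
  case empty
  have "tpow {#} 1 = {#}" by simp
  then show ?case unfolding tensor_nilpotent_def by (metis tensor_eq.refl)
next
  case (add p x)
  obtain a b where p: "p = (a, b)" by fastforce
  then have "nilpotent a \<or> nilpotent b" and "\<not> has_nonnilpotent_term x"
    using add.prems by (auto simp: has_nonnilpotent_term_def)
  then have "tensor_nilpotent \<phi> \<psi> ({#(a, b)#} + x)"
    using tensor_nilpotent_union tensor_nilpotent_singleton add.IH by blast
  then show ?case using p by simp
qed

lemma has_nonnilpotent_term_tmult_iff:
  assumes "irreducible_semiring TYPE('a::comm_semiring_1)"
    and "irreducible_semiring TYPE('b::comm_semiring_1)"
  shows "has_nonnilpotent_term (tmult (x :: ('a \<times> 'b) multiset) y)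
    \<longleftrightarrow> has_nonnilpotent_term x \<and> has_nonnilpotent_term y"
  unfolding has_nonnilpotent_term_def set_mset_tmult
  using nilpotent_mult_iff[OF assms(1)] nilpotent_mult_iff[OF assms(2)]
  by (auto simp: pair_mult_def) force+

lemma has_nonnilpotent_term_tpow:
  assumes "irreducible_semiring TYPE('a::comm_semiring_1)"
    and "irreducible_semiring TYPE('b::comm_semiring_1)"
    and "has_nonnilpotent_term (x :: ('a \<times> 'b) multiset)"
  shows "has_nonnilpotent_term (tpow x n)"
  using assms(3) by (induction n)
    (simp add: has_nonnilpotent_term_def not_nilpotent_one,
     simp add: has_nonnilpotent_term_tmult_iff[OF assms(1,2)])

lemma tensor_eq_has_nonnilpotent_term:
  fixes \<phi> :: "'r::comm_semiring_1 \<Rightarrow> 'a::comm_semiring_1"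
    and \<psi> :: "'r \<Rightarrow> 'b::comm_semiring_1"
  assumes "(1::'a) + 1 = 1" and "(1::'b) + 1 = 1"
    and irred_a: "irreducible_semiring TYPE('a)" and irred_b: "irreducible_semiring TYPE('b)"
    and "\<And>r. nilpotent (\<phi> r) \<longleftrightarrow> nilpotent (\<psi> r)"
    and "tensor_eq \<phi> \<psi> x y"
  shows "has_nonnilpotent_term x \<longleftrightarrow> has_nonnilpotent_term y"
  using assms(6)
proof (induction rule: tensor_eq.induct)
  case (addL a a' b)
  then show ?case by (auto simp: has_nonnilpotent_term_def nilpotent_add_iff[OF assms(1)])
next
  case (addR a b b')
  then show ?case by (auto simp: has_nonnilpotent_term_def nilpotent_add_iff[OF assms(2)])
next
  case (scal r a b)
  then show ?case
    by (auto simp: has_nonnilpotent_term_def assms(5)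
        nilpotent_mult_iff[OF irred_a] nilpotent_mult_iff[OF irred_b])
next
  case (mult x y z)
  then show ?case by (simp add: has_nonnilpotent_term_tmult_iff[OF irred_a irred_b])
qed (auto simp: has_nonnilpotent_term_def nilpotent_zero)

lemma not_has_nonnilpotent_term_if_tensor_nilpotent:
  fixes \<phi> :: "'r::comm_semiring_1 \<Rightarrow> 'a::comm_semiring_1"
    and \<psi> :: "'r \<Rightarrow> 'b::comm_semiring_1"
  assumes "(1::'a) + 1 = 1" and "(1::'b) + 1 = 1"
    and "irreducible_semiring TYPE('a)" and "irreducible_semiring TYPE('b)"
    and "\<And>r. nilpotent (\<phi> r) \<longleftrightarrow> nilpotent (\<psi> r)"
    and "tensor_nilpotent \<phi> \<psi> x"
  shows "\<not> has_nonnilpotent_term x"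
proof
  assume "has_nonnilpotent_term x"
  obtain n where "tensor_eq \<phi> \<psi> (tpow x n) {#}"
    using assms(6) unfolding tensor_nilpotent_def by blast
  then have "has_nonnilpotent_term (tpow x n) \<longleftrightarrow> has_nonnilpotent_term ({#} :: ('a \<times> 'b) multiset)"
    by (rule tensor_eq_has_nonnilpotent_term[where \<phi> = \<phi> and \<psi> = \<psi>, OF assms(1-5)])
  moreover have "has_nonnilpotent_term (tpow x n)"
    by (rule has_nonnilpotent_term_tpow[OF assms(3,4) \<open>has_nonnilpotent_term x\<close>])
  ultimately show False by (auto simp: has_nonnilpotent_term_def)
qed

theorem proposition5p10:
  fixes \<phi> :: "'r::comm_semiring_1 \<Rightarrow> 'a::comm_semiring_1"
    and \<psi> :: "'r \<Rightarrow> 'b::comm_semiring_1"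
  assumes "idempotent_semiring TYPE('r)"
    and "irreducible_semiring TYPE('a)" and "irreducible_semiring TYPE('b)"
    and "semiring_hom \<phi>" and "semiring_hom \<psi>"
    and "\<forall>r. \<phi> r = 0 \<longrightarrow> r = 0" and "\<forall>r. \<psi> r = 0 \<longrightarrow> r = 0"
  shows "tensor_irreducible \<phi> \<psi>"
  unfolding tensor_irreducible_def
proof (intro allI impI)
  fix x y :: "('a \<times> 'b) multiset"
  assume "tensor_nilpotent \<phi> \<psi> (tmult x y)"
  moreover have "nilpotent (\<phi> r) \<longleftrightarrow> nilpotent (\<psi> r)" for r
    using nilpotent_semiring_hom_iff[OF assms(4,6)] nilpotent_semiring_hom_iff[OF assms(5,7)]
    by blast
  ultimately have "\<not> has_nonnilpotent_term (tmult x y)"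
    using not_has_nonnilpotent_term_if_tensor_nilpotent[OF semiring_hom_one_add_one[OF assms(1,4)]
        semiring_hom_one_add_one[OF assms(1,5)] assms(2,3)] by blast
  then have "\<not> has_nonnilpotent_term x \<or> \<not> has_nonnilpotent_term y"
    using has_nonnilpotent_term_tmult_iff[OF assms(2,3)] by blast
  then show "tensor_nilpotent \<phi> \<psi> x \<or> tensor_nilpotent \<phi> \<psi> y"
    using tensor_nilpotent_if_not_has_nonnilpotent_term by blast
qed

end
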